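(* Assume (A1) and (A2). For each $k$, let $v^{(k)}$ denote the minimizer of $\min_{v\in\mathbb{R}^n}\{J(x^{(k)}-t_kv)+t_kH^*(v)\}$ (equivalently of $\min_{v\in\mathrm{int}\,\mathrm{dom}\,H^*}\{t_kD_{H^*}(x^{(k)}/t_k,v)+J^*(\nabla H^*(v))\}$). Then there is $N\in\mathbb{N}$ such that for all $k\ge N$ this minimizer exists and is unique (and the two problems have the same minimizer), and $\lim_{k\to\infty}v^{(k)}=v^{(0)}$.
   Context: $\Gamma_0(\mathbb{R}^n)$ denotes the set of proper, convex, lower semicontinuous functions $\mathbb{R}^n\to\mathbb{R}\cup\{+\infty\}$; $f^*$ is the Legendre–Fenchel transform. A function $g$ is 1-coercive if $g(x)/\|x\|\to+\infty$ as $\|x\|\to\infty$. A function $f\in\Gamma_0(\mathbb{R}^n)$ is Legendre if: $\mathrm{int}\,\mathrm{dom}\,f\neq\emptyset$; $f$ is differentiable on $\mathrm{int}\,\mathrm{dom}\,f$; $\partial f(x)=\emptyset$ for $x\in\mathrm{dom}\,f\setminus\mathrm{int}\,\mathrm{dom}\,f$ and $\partial f(x)=\{\nabla f(x)\}$ on $\mathrm{int}\,\mathrm{dom}\,f$; and $f$ is strictly convex on $\mathrm{int}\,\mathrm{dom}\,f$. $D_f(x,u)=f(x)-f(u)-\langle\nabla f(u),x-u\rangle$. Assumption (A1): $J,H\in\Gamma_0(\mathbb{R}^n)$, $J$ is 1-coercive, and $H$ is a Legendre function. Assumption (A2): $v^{(0)}\in\mathrm{int}\,\mathrm{dom}\,H^*$;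 $(t_k)$ is a sequence of positive numbers with $t_k\to+\infty$; $(x^{(k)})\subset\mathbb{R}^n$ with $x^{(k)}/t_k\to v^{(0)}$; $x^{(k)}-t_kv^{(0)}\in\mathrm{dom}\,J$ for all $k$; and the sequence $J(x^{(k)}-t_kv^{(0)})/t_k$ is bounded from above. *)

theory Defs
  imports "HOL-Analysis.Analysis"
begin

text \<open>Extended-real-valued functions on a Euclidean space 'a (standing for R^n).
  The value +infinity is PInfty.\<close>

definition edom :: "('a \<Rightarrow> ereal) \<Rightarrow> 'a set" where
  "edom f = {x. f x < \<infinity>}"

definition proper_fun :: "('a \<Rightarrow> ereal) \<Rightarrow> bool" where
  "proper_fun f \<longleftrightarrow> edom f \<noteq> {} \<and> (\<forall>x. f x \<noteq> -\<infinity>)"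

definition epigraph :: "('a \<Rightarrow> ereal) \<Rightarrow> ('a \<times> real) set" where
  "epigraph f = {(x, r). f x \<le> ereal r}"

definition convex_fun :: "('a::real_vector \<Rightarrow> ereal) \<Rightarrow> bool" where
  "convex_fun f \<longleftrightarrow> convex (epigraph f)"

definition lsc_fun :: "('a::topological_space \<Rightarrow> ereal) \<Rightarrow> bool" where
  "lsc_fun f \<longleftrightarrow> (\<forall>x. f x \<le> Liminf (at x) f)"

definition Gamma0 :: "('a::real_normed_vector \<Rightarrow> ereal) \<Rightarrow> bool" where
  "Gamma0 f \<longleftrightarrow> proper_fun f \<and> convex_fun f \<and> lsc_fun f"

definition fenchel_conj :: "('a::real_inner \<Rightarrow> ereal) \<Rightarrow> 'a \<Rightarrow> ereal" where
  "fenchel_conj f y = (SUP x. ereal (inner x y) - f x)"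

definition one_coercive :: "('a::real_normed_vector \<Rightarrow> ereal) \<Rightarrow> bool" where
  "one_coercive g \<longleftrightarrow> ((\<lambda>x. g x / ereal (norm x)) \<longlongrightarrow> \<infinity>) at_infinity"

definition subdiff :: "('a::real_inner \<Rightarrow> ereal) \<Rightarrow> 'a \<Rightarrow> 'a set" where
  "subdiff f x = {g. x \<in> edom f \<and> (\<forall>y. f x + ereal (inner g (y - x)) \<le> f y)}"

text \<open>Differentiability and gradient of f at a point, f viewed as a real function
  (relevant on the interior of the domain, where f is finite).\<close>
definition differentiable_efun :: "('a::real_inner \<Rightarrow> ereal) \<Rightarrow> 'a \<Rightarrow> bool" where
  "differentiable_efun f x \<longleftrightarrow> (\<exists>D. GDERIV (\<lambda>y. real_of_ereal (f y)) x :> D)"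

definition egrad :: "('a::real_inner \<Rightarrow> ereal) \<Rightarrow> 'a \<Rightarrow> 'a" where
  "egrad f x = (THE D. GDERIV (\<lambda>y. real_of_ereal (f y)) x :> D)"

definition strictly_convex_on_set :: "'a::real_vector set \<Rightarrow> ('a \<Rightarrow> ereal) \<Rightarrow> bool" where
  "strictly_convex_on_set S f \<longleftrightarrow>
     (\<forall>x\<in>S. \<forall>y\<in>S. \<forall>t. x \<noteq> y \<longrightarrow> 0 < t \<longrightarrow> t < 1 \<longrightarrow>
        f ((1 - t) *\<^sub>R x + t *\<^sub>R y) < ereal (1 - t) * f x + ereal t * f y)"

definition legendre :: "('a::euclidean_space \<Rightarrow> ereal) \<Rightarrow> bool" where
  "legendre f \<longleftrightarrow> Gamma0 f \<and>
     interior (edom f) \<noteq> {} \<and>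
     (\<forall>x\<in>interior (edom f). differentiable_efun f x) \<and>
     (\<forall>x\<in>edom f - interior (edom f). subdiff f x = {}) \<and>
     (\<forall>x\<in>interior (edom f). subdiff f x = {egrad f x}) \<and>
     strictly_convex_on_set (interior (edom f)) f"

definition bregman :: "('a::real_inner \<Rightarrow> ereal) \<Rightarrow> 'a \<Rightarrow> 'a \<Rightarrow> ereal" where
  "bregman f x u = f x - f u - ereal (inner (egrad f u) (x - u))"

end

theory Submission
  imports Defs
begin

(* The objective J (x - t v) + t H*(v) is lower semicontinuous and coercive (J grows
  superlinearly, H* has an affine minorant), so minimisers v_k exist. Comparing their value
  with the value at v0 bounds J (t_k e_k) / t_k linearly in |e_k| for e_k = x_k / t_k - v_k;
  1-coercivity of J then forces e_k -> 0, i.e. v_k -> v0.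
  Because H is Legendre, for w in the open set int dom H* the supremum defining H*(w) is
  attained at a unique point (strict convexity of H), which depends continuously on w and is
  the gradient of H* at w. Once v_k lies in int dom H*, the optimality condition
  grad H*(v_k) \<in> \<partial>J(x_k - t_k v_k) and the strict convexity of H* near v_k make v_k the
  unique minimiser, and the Fenchel-Young inequality shows that v_k also uniquely minimises the
  Bregman formulation. *)

section \<open>Lower semicontinuity\<close>

lemma lsc_fun_iff_nhds:
  "lsc_fun f \<longleftrightarrow> (\<forall>y (c::real). ereal c < f y \<longrightarrow> eventually (\<lambda>z. ereal c < f z) (nhds y))"
proof
  assume lsc: "lsc_fun f"
  show "\<forall>y (c::real). ereal c < f y \<longrightarrow> eventually (\<lambda>z. ereal c < f z) (nhds y)"
  proof (intro allI impI)
    fix y c assume c: "ereal c < f y"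
    have "f y \<le> Liminf (at y) f" using lsc unfolding lsc_fun_def by blast
    hence "eventually (\<lambda>z. ereal c < f z) (at y)" using c le_Liminf_iff by blast
    with c show "eventually (\<lambda>z. ereal c < f z) (nhds y)" by (simp add: eventually_nhds_conv_at)
  qed
next
  assume nhds: "\<forall>y (c::real). ereal c < f y \<longrightarrow> eventually (\<lambda>z. ereal c < f z) (nhds y)"
  show "lsc_fun f"
    unfolding lsc_fun_def le_Liminf_iff
  proof (intro allI impI)
    fix y and e :: ereal assume "e < f y"
    then obtain c where c: "e < ereal c" "ereal c < f y" using ereal_dense2 by blast
    have "eventually (\<lambda>z. ereal c < f z) (at y)"
      using nhds c(2) by (simp add: eventually_nhds_conv_at)
    thus "eventually (\<lambda>z. e < f z) (at y)" by eventually_elim (use c(1) in auto)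
  qed
qed

lemma lsc_fun_continuous:
  assumes "\<And>y. isCont g y"
  shows "lsc_fun (\<lambda>x. ereal (g x))"
  unfolding lsc_fun_iff_nhds
proof (intro allI impI)
  fix y c assume "ereal c < ereal (g y)"
  moreover have "(g \<longlongrightarrow> g y) (nhds y)"
    using assms[of y] by (simp add: isCont_def tendsto_at_iff_tendsto_nhds)
  ultimately show "eventually (\<lambda>z. ereal c < ereal (g z)) (nhds y)"
    by (simp add: order_tendstoD(1))
qed

lemma lsc_fun_comp:
  assumes "lsc_fun f" "\<And>y. isCont g y"
  shows "lsc_fun (\<lambda>x. f (g x))"
  unfolding lsc_fun_iff_nhds
proof (intro allI impI)
  fix y c assume "ereal c < f (g y)"
  hence "eventually (\<lambda>z. ereal c < f z) (nhds (g y))"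
    using assms(1) unfolding lsc_fun_iff_nhds by blast
  moreover have "filterlim g (nhds (g y)) (nhds y)"
    using assms(2)[of y] by (simp add: isCont_def tendsto_at_iff_tendsto_nhds)
  ultimately show "eventually (\<lambda>z. ereal c < f (g z)) (nhds y)"
    unfolding filterlim_iff by blast
qed

lemma lsc_fun_add:
  assumes "lsc_fun f" "lsc_fun g" "\<And>x. f x \<noteq> -\<infinity>" "\<And>x. g x \<noteq> -\<infinity>"
  shows "lsc_fun (\<lambda>x. f x + g x)"
  unfolding lsc_fun_iff_nhds
proof (intro allI impI)
  fix y c assume c: "ereal c < f y + g y"
  obtain c1 c2 where cc: "ereal c1 < f y" "ereal c2 < g y" "c \<le> c1 + c2"
  proof (cases "f y"; cases "g y")
    fix a b assume "f y = ereal a" "g y = ereal b"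
    with c that show thesis by (intro that[of "a - (a + b - c)/2" "b - (a + b - c)/2"]) auto
  next
    fix a assume "f y = ereal a" "g y = \<infinity>"
    thus thesis by (intro that[of "a - 1" "c - a + 1"]) auto
  next
    fix b assume "f y = \<infinity>" "g y = ereal b"
    thus thesis by (intro that[of "c - b + 1" "b - 1"]) auto
  next
    assume "f y = \<infinity>" "g y = \<infinity>"
    thus thesis by (intro that[of c 0]) auto
  qed (use assms(3,4) in auto)
  have "eventually (\<lambda>z. ereal c1 < f z) (nhds y)" "eventually (\<lambda>z. ereal c2 < g z) (nhds y)"
    using assms(1,2) cc(1,2) unfolding lsc_fun_iff_nhds by blast+
  thus "eventually (\<lambda>z. ereal c < f z + g z) (nhds y)"
  proof eventually_elim
    case (elim z)
    have "ereal c \<le> ereal c1 + ereal c2" using cc by simp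
    also have "\<dots> < f z + g z" using elim by (intro ereal_add_strict_mono2) auto
    finally show ?case .
  qed
qed

lemma lsc_fun_cmult:
  assumes "lsc_fun f" "s > 0"
  shows "lsc_fun (\<lambda>x. ereal s * f x)"
  unfolding lsc_fun_iff_nhds
proof (intro allI impI)
  fix y c assume "ereal c < ereal s * f y"
  hence "ereal (c / s) < f y"
    using assms(2) by (cases "f y") (auto simp: field_simps)
  hence "eventually (\<lambda>z. ereal (c / s) < f z) (nhds y)"
    using assms(1) unfolding lsc_fun_iff_nhds by blast
  thus "eventually (\<lambda>z. ereal c < ereal s * f z) (nhds y)"
  proof eventually_elim
    case (elim z)
    thus ?case using assms(2) by (cases "f z") (auto simp: field_simps)
  qed
qed

lemma lsc_fun_compact_lower_bound:
  assumes lsc: "lsc_fun f" and "compact C" "C \<noteq> {}" and above: "\<And>y. y \<in> C \<Longrightarrow> m < f y"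
  obtains c where "m < ereal c" "\<And>y. y \<in> C \<Longrightarrow> ereal c < f y"
proof -
  have "\<forall>y\<in>C. \<exists>c::real. m < ereal c \<and> ereal c < f y" using above ereal_dense2 by blast
  then obtain c where c: "\<And>y. y \<in> C \<Longrightarrow> m < ereal (c y) \<and> ereal (c y) < f y" by metis
  have "\<forall>y\<in>C. \<exists>S. open S \<and> y \<in> S \<and> (\<forall>z\<in>S. ereal (c y) < f z)"
    using lsc c unfolding lsc_fun_iff_nhds eventually_nhds by blast
  then obtain S where S: "\<And>y. y \<in> C \<Longrightarrow> open (S y) \<and> y \<in> S y \<and> (\<forall>z\<in>S y. ereal (c y) < f z)"
    by metis
  obtain D where D: "D \<subseteq> C" "finite D" "C \<subseteq> (\<Union>y\<in>D. S y)"
    using compactE_image[of C C S] \<open>compact C\<close> S by blast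
  with \<open>C \<noteq> {}\<close> have "D \<noteq> {}" by blast
  show thesis
  proof (rule that[of "Min (c ` D)"])
    have "Min (c ` D) \<in> c ` D" using D \<open>D \<noteq> {}\<close> by simp
    thus "m < ereal (Min (c ` D))" using D c by auto
    fix z assume "z \<in> C"
    then obtain y where y: "y \<in> D" "z \<in> S y" using D by blast
    have "ereal (Min (c ` D)) \<le> ereal (c y)" using D y by simp
    also have "\<dots> < f z" using S y D by blast
    finally show "ereal (Min (c ` D)) < f z" .
  qed
qed

lemma lsc_fun_attains_min:
  fixes f :: "'a::euclidean_space \<Rightarrow> ereal"
  assumes lsc: "lsc_fun f" and far: "\<And>x. K \<le> norm x \<Longrightarrow> f z \<le> f x"
  shows "\<exists>v. \<forall>u. f v \<le> f u"
proof (rule ccontr)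
  assume "\<nexists>v. \<forall>u. f v \<le> f u"
  hence below_all: "(INF x. f x) < f v" for v
    by (metis INF_lower UNIV_I not_le order_le_less_trans)
  define C where "C = cball (0::'a) (max K (norm z) + 1)"
  have "z \<in> C" "compact C" by (simp_all add: C_def)
  then obtain c where c: "(INF x. f x) < ereal c" "\<And>y. y \<in> C \<Longrightarrow> ereal c < f y"
    using lsc_fun_compact_lower_bound[OF lsc _ _ below_all] by blast
  have "ereal c \<le> f x" for x
  proof (cases "x \<in> C")
    case False
    hence "f z \<le> f x" by (intro far) (auto simp: C_def)
    with c(2)[OF \<open>z \<in> C\<close>] show ?thesis by simp
  qed (use c(2) in \<open>auto intro: less_imp_le\<close>)
  hence "ereal c \<le> (INF x. f x)" by (rule INF_greatest)
  with c(1) show False by simp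
qed

section \<open>Convexity, coercivity and one-sided derivatives\<close>

lemma convex_funD:
  assumes "convex_fun f" "f a = ereal ja" "f b = ereal jb" "0 \<le> s" "s \<le> 1"
  shows "f ((1 - s) *\<^sub>R a + s *\<^sub>R b) \<le> ereal ((1 - s) * ja + s * jb)"
proof -
  have "(a, ja) \<in> epigraph f" "(b, jb) \<in> epigraph f" using assms by (auto simp: epigraph_def)
  hence "(1 - s) *\<^sub>R (a, ja) + s *\<^sub>R (b, jb) \<in> epigraph f"
    using assms(1,4,5) unfolding convex_fun_def by (intro convexD) auto
  thus ?thesis by (simp add: epigraph_def)
qed

lemma one_coercive_linear_bound:
  fixes J :: "'a::real_normed_vector \<Rightarrow> ereal"
  assumes "one_coercive J"
  obtains R where "\<And>y :: 'a. R \<le> norm y \<Longrightarrow> ereal (c * norm y) \<le> J y"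
proof -
  have "eventually (\<lambda>y. ereal c < J y / ereal (norm y)) at_infinity"
    using assms unfolding one_coercive_def tendsto_PInfty by blast
  then obtain b where b: "\<And>y :: 'a. b \<le> norm y \<Longrightarrow> ereal c < J y / ereal (norm y)"
    unfolding eventually_at_infinity by blast
  show thesis
  proof (rule that[of "max b 1"])
    fix y :: 'a assume "max b 1 \<le> norm y"
    hence "norm y > 0" "ereal c < J y / ereal (norm y)" using b by auto
    thus "ereal (c * norm y) \<le> J y"
      by (cases "J y") (auto simp: field_simps)
  qed
qed

lemma one_coercive_tendsto_zero:
  assumes J: "one_coercive J" and t: "filterlim t at_top sequentially" and t_pos: "\<And>k. t k > 0"
    and bound: "\<And>k. J (t k *\<^sub>R e k) \<le> ereal (t k * (K + L * norm (e k)))"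
  shows "e \<longlonglongrightarrow> 0"
  unfolding tendsto_iff dist_norm diff_zero
proof (intro allI impI)
  fix \<epsilon> :: real assume "\<epsilon> > 0"
  \<comment> \<open>large enough that \<open>t k * norm (e k) \<ge> R\<close> forces \<open>norm (e k) < \<epsilon> / 2\<close>\<close>
  define c where "c = L + 2 * (\<bar>K\<bar> + 1) / \<epsilon>"
  obtain R where R: "\<And>y. R \<le> norm y \<Longrightarrow> ereal (c * norm y) \<le> J y"
    using one_coercive_linear_bound[OF J] by blast
  have "eventually (\<lambda>k. R / \<epsilon> < t k) sequentially"
    using t by (simp add: filterlim_at_top_dense)
  thus "eventually (\<lambda>k. norm (e k) < \<epsilon>) sequentially"
  proof eventually_elim
    case (elim k)
    show ?case
    proof (cases "R \<le> t k * norm (e k)")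
      case True
      with R[of "t k *\<^sub>R e k"] bound[of k] t_pos[of k]
      have "t k * (c * norm (e k)) \<le> t k * (K + L * norm (e k))"
        by (simp add: algebra_simps) (metis ereal_less_eq(3) order_trans)
      hence "c * norm (e k) \<le> K + L * norm (e k)"
        using t_pos[of k] by (simp add: mult_le_cancel_left_pos)
      hence "(2 * (\<bar>K\<bar> + 1) * norm (e k)) / \<epsilon> \<le> K"
        by (simp add: c_def algebra_simps)
      hence "2 * (\<bar>K\<bar> + 1) * norm (e k) \<le> K * \<epsilon>"
        using \<open>\<epsilon> > 0\<close> by (simp add: pos_divide_le_eq)
      also have "\<dots> < (\<bar>K\<bar> + 1) * \<epsilon>" using \<open>\<epsilon> > 0\<close> by (simp add: abs_if)
      finally have "(\<bar>K\<bar> + 1) * (2 * norm (e k)) < (\<bar>K\<bar> + 1) * \<epsilon>"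
        by (simp add: algebra_simps)
      hence "2 * norm (e k) < \<epsilon>" by (rule mult_left_less_imp_less) simp
      thus ?thesis using norm_ge_zero[of "e k"] by linarith
    next
      case False
      with elim \<open>\<epsilon> > 0\<close> have "t k * norm (e k) < t k * \<epsilon>"
        by (simp add: field_simps)
      thus ?thesis using t_pos[of k] by simp
    qed
  qed
qed

lemma eventually_segment_in_open:
  fixes v :: "'a::real_normed_vector"
  assumes "open U" "v \<in> U"
  shows "eventually (\<lambda>r. 0 < r \<and> r < 1 \<and> v + r *\<^sub>R d \<in> U) (at_right 0)"
proof -
  obtain e where e: "e > 0" "ball v e \<subseteq> U" using assms open_contains_ball by blast
  define b where "b = min 1 (e / (norm d + 1))"
  have "0 < b" using e by (simp add: b_def add_nonneg_pos)
  hence "eventually (\<lambda>r. r \<in> {0<..<b}) (at_right 0)" by (rule eventually_at_right_real)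
  thus ?thesis
  proof eventually_elim
    case (elim r)
    hence "r * norm d \<le> r * (norm d + 1)" "r * (norm d + 1) < e"
      by (auto simp: b_def less_divide_eq add_nonneg_pos)
    moreover have "norm (r *\<^sub>R d) = r * norm d" using elim by simp
    ultimately have "norm (r *\<^sub>R d) < e" by linarith
    hence "v + r *\<^sub>R d \<in> ball v e" by (simp add: dist_norm)
    thus ?case using elim e by (auto simp: b_def)
  qed
qed

lemma has_derivative_directional_limit:
  assumes "(f has_derivative f') (at x)"
  shows "((\<lambda>r. (f (x + r *\<^sub>R d) - f x) / r) \<longlongrightarrow> f' d) (at_right 0)"
proof -
  have "((\<lambda>r. x + r *\<^sub>R d) has_derivative (\<lambda>r. r *\<^sub>R d)) (at 0)"
    by (auto intro!: derivative_eq_intros)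
  moreover have "(f has_derivative f') (at ((\<lambda>r. x + r *\<^sub>R d) 0))" using assms by simp
  ultimately have "((\<lambda>r. f (x + r *\<^sub>R d)) has_derivative (\<lambda>r. f' (r *\<^sub>R d))) (at 0)"
    by (rule has_derivative_compose)
  moreover interpret bounded_linear f' by (rule has_derivative_bounded_linear[OF assms])
  have "(\<lambda>r. f' (r *\<^sub>R d)) = (*) (f' d)" by (simp add: fun_eq_iff scaleR)
  ultimately have "((\<lambda>r. f (x + r *\<^sub>R d)) has_field_derivative f' d) (at 0)"
    by (simp add: has_field_derivative_def)
  hence "((\<lambda>r. (f (x + r *\<^sub>R d) - f x) / r) \<longlongrightarrow> f' d) (at 0)"
    by (simp add: DERIV_def)
  thus ?thesis by (rule tendsto_mono[OF at_le, rotated]) simp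
qed

section \<open>The Fenchel conjugate\<close>

lemma fenchel_young: "ereal (inner q y) - f q \<le> fenchel_conj f y"
  unfolding fenchel_conj_def by (rule SUP_upper) simp

lemma fenchel_young_real:
  fixes f :: "'a::real_inner \<Rightarrow> ereal"
  assumes "f q = ereal h"
  shows "ereal (inner q y - h) \<le> fenchel_conj f y"
  using fenchel_young[of q y f] assms by simp

lemma fenchel_conj_ge_norm:
  fixes f :: "'a::real_inner \<Rightarrow> ereal"
  assumes "f p = ereal h"
  shows "ereal (- (norm p * norm v) - h) \<le> fenchel_conj f v"
proof -
  have "- (norm p * norm v) - h \<le> inner p v - h" using Cauchy_Schwarz_ineq2[of p v] by linarith
  thus ?thesis using fenchel_young_real[of f, OF assms, of v] by (meson ereal_less_eq(3) order_trans)
qed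

lemma proper_funD:
  assumes "proper_fun f"
  shows "f x \<noteq> -\<infinity>" and "\<exists>q h. f q = ereal h"
  using assms unfolding proper_fun_def edom_def
  by (auto, metis ereal_cases less_ereal.simps(2,5))

lemma fenchel_conj_not_MInf:
  assumes "proper_fun f"
  shows "fenchel_conj f y \<noteq> -\<infinity>"
proof -
  obtain q h where "f q = ereal h" using proper_funD(2)[OF assms] by blast
  from fenchel_young_real[of f, OF this, of y] show ?thesis by auto
qed

lemma fenchel_conj_real:
  assumes "proper_fun f" "y \<in> edom (fenchel_conj f)"
  shows "fenchel_conj f y = ereal (real_of_ereal (fenchel_conj f y))"
  using assms fenchel_conj_not_MInf[OF assms(1), of y] unfolding edom_def
  by (cases "fenchel_conj f y") auto

lemma lsc_fun_fenchel_conj: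
  assumes "proper_fun f"
  shows "lsc_fun (fenchel_conj f)"
  unfolding lsc_fun_iff_nhds
proof (intro allI impI)
  fix y c assume "ereal c < fenchel_conj f y"
  then obtain q where q: "ereal c < ereal (inner q y) - f q"
    unfolding fenchel_conj_def by (auto simp: less_SUP_iff)
  then obtain h where h: "f q = ereal h"
    using proper_funD(1)[OF assms, of q] by (cases "f q") auto
  have "lsc_fun (\<lambda>z. ereal (inner q z - h))"
    by (intro lsc_fun_continuous continuous_intros)
  with q h have "eventually (\<lambda>z. ereal c < ereal (inner q z - h)) (nhds y)"
    unfolding lsc_fun_iff_nhds by simp
  thus "eventually (\<lambda>z. ereal c < fenchel_conj f z) (nhds y)"
    by eventually_elim (use fenchel_young_real[of f, OF h] in \<open>blast intro: less_le_trans\<close>)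
qed

lemma fenchel_conj_eq_if_subdiff:
  assumes "g \<in> subdiff f y0" "f y0 = ereal j"
  shows "fenchel_conj f g = ereal (inner g y0 - j)"
proof (rule antisym)
  show "fenchel_conj f g \<le> ereal (inner g y0 - j)"
    unfolding fenchel_conj_def
  proof (rule SUP_least)
    fix y
    have "ereal (j + inner g (y - y0)) \<le> f y"
      using assms unfolding subdiff_def by auto
    thus "ereal (inner y g) - f y \<le> ereal (inner g y0 - j)"
      by (cases "f y") (auto simp: inner_diff_right inner_commute)
  qed
  show "ereal (inner g y0 - j) \<le> fenchel_conj f g"
    using fenchel_young_real[of f, OF assms(2), of g] by (simp add: inner_commute)
qed

definition conj_attained :: "('a::real_inner \<Rightarrow> ereal) \<Rightarrow> 'a \<Rightarrow> 'a \<Rightarrow> bool" where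
  "conj_attained f w q \<longleftrightarrow> f q \<noteq> \<infinity> \<and> fenchel_conj f w = ereal (inner q w) - f q"

lemma conj_attainedE:
  assumes "conj_attained f w q" "proper_fun f"
  obtains h where "f q = ereal h" "fenchel_conj f w = ereal (inner q w - h)"
  using assms proper_funD(1)[OF assms(2), of q] unfolding conj_attained_def
  by (cases "f q") auto

lemma conj_attainedI:
  assumes "f q = ereal h" "fenchel_conj f w \<le> ereal (inner q w - h)"
  shows "conj_attained f w q"
  using assms fenchel_young_real[of f, OF assms(1), of w] unfolding conj_attained_def
  by (auto intro: antisym)

lemma conj_attained_imp_subdiff:
  assumes "conj_attained f w q" "proper_fun f"
  shows "w \<in> subdiff f q"
proof -
  obtain h where h: "f q = ereal h" "fenchel_conj f w = ereal (inner q w - h)"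
    using conj_attainedE[OF assms] .
  have "ereal (h + inner w (y - q)) \<le> f y" for y
  proof (cases "f y")
    case (real hy)
    from fenchel_young_real[of f, OF this, of w] h real show ?thesis
      by (simp add: inner_diff_right inner_commute)
  qed (use proper_funD(1)[OF assms(2)] in auto)
  with h show ?thesis unfolding subdiff_def edom_def by auto
qed

lemma fenchel_conj_bounded_near:
  fixes f :: "'a::euclidean_space \<Rightarrow> ereal"
  assumes "proper_fun f" "w \<in> interior (edom (fenchel_conj f))"
  obtains d C where "d > 0"
    "\<And>b \<sigma>. b \<in> Basis \<Longrightarrow> \<bar>\<sigma>\<bar> = 1 \<Longrightarrow> fenchel_conj f (w + (\<sigma> * d) *\<^sub>R b) \<le> ereal C"
proof -
  obtain e where e: "e > 0" "ball w e \<subseteq> edom (fenchel_conj f)"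
    using assms(2) mem_interior by blast
  define P where "P = (\<lambda>(b, \<sigma>). w + (\<sigma> * (e / 2)) *\<^sub>R b) ` (Basis \<times> {-1, 1::real})"
  define C where "C = Max ((\<lambda>y. real_of_ereal (fenchel_conj f y)) ` P)"
  have "finite P" "P \<subseteq> ball w e" using e by (auto simp: P_def dist_norm)
  have "fenchel_conj f y \<le> ereal C" if "y \<in> P" for y
  proof -
    have "fenchel_conj f y = ereal (real_of_ereal (fenchel_conj f y))"
      using that \<open>P \<subseteq> ball w e\<close> e(2) by (intro fenchel_conj_real[OF assms(1)]) blast
    moreover have "real_of_ereal (fenchel_conj f y) \<le> C"
      unfolding C_def using \<open>finite P\<close> that by (intro Max_ge) auto
    ultimately show ?thesis by (metis ereal_less_eq(3))
  qed
  moreover have "w + (\<sigma> * (e / 2)) *\<^sub>R b \<in> P" if "b \<in> Basis" "\<bar>\<sigma>\<bar> = 1" for b \<sigma>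
    unfolding P_def using that
    by (intro image_eqI[of _ _ "(b, \<sigma>)"]) (auto simp: abs_if split: if_splits)
  ultimately show thesis using e(1) by (intro that[of "e / 2"]) auto
qed

lemma fenchel_conj_interior_growth:
  fixes f :: "'a::euclidean_space \<Rightarrow> ereal"
  assumes "proper_fun f" "w \<in> interior (edom (fenchel_conj f))"
  obtains a C where "a > 0" "\<And>q. ereal (inner q w + a * norm q - C) \<le> f q"
proof -
  obtain d C where d: "d > 0" and C:
    "\<And>b \<sigma>. b \<in> Basis \<Longrightarrow> \<bar>\<sigma>\<bar> = 1 \<Longrightarrow> fenchel_conj f (w + (\<sigma> * d) *\<^sub>R b) \<le> ereal C"
    using fenchel_conj_bounded_near[OF assms] by blast
  \<comment> \<open>Fenchel-Young at \<open>w \<plusminus> d b\<close> with the sign of \<open>inner q b\<close>, summed over the basis\<close>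
  have "ereal (inner q w + (d / DIM('a)) * norm q - C) \<le> f q" for q
  proof (cases "f q")
    case (real h)
    have "inner q w + d * \<bar>inner q b\<bar> - C \<le> h" if b: "b \<in> Basis" for b
    proof -
      define \<sigma> where "\<sigma> = (if inner q b \<ge> 0 then 1 else -1::real)"
      have "\<bar>\<sigma>\<bar> = 1" by (simp add: \<sigma>_def)
      from order_trans[OF fenchel_young_real[of f, OF real] C[OF b this]]
      have "inner q (w + (\<sigma> * d) *\<^sub>R b) - h \<le> C" by simp
      moreover have "inner q (w + (\<sigma> * d) *\<^sub>R b) = inner q w + d * \<bar>inner q b\<bar>"
        by (auto simp: \<sigma>_def inner_add_right abs_if)
      ultimately show ?thesis by linarith
    qed
    hence "(\<Sum>b\<in>Basis. inner q w + d * \<bar>inner q b\<bar> - C) \<le> (\<Sum>b\<in>(Basis::'a set). h)"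
      by (intro sum_mono) auto
    hence "DIM('a) * (inner q w - C) + d * (\<Sum>b\<in>Basis. \<bar>inner q b\<bar>) \<le> DIM('a) * h"
      by (simp add: sum.distrib sum_subtractf sum_distrib_left algebra_simps)
    moreover have "d * norm q \<le> d * (\<Sum>b\<in>Basis. \<bar>inner q b\<bar>)"
      using d norm_le_l1[of q] by simp
    ultimately have "DIM('a) * (inner q w + (d / DIM('a)) * norm q - C) \<le> DIM('a) * h"
      by (simp add: algebra_simps)
    thus ?thesis using real by simp
  qed (use proper_funD(1)[OF assms(1)] in auto)
  with d show thesis by (intro that[of "d / DIM('a)"]) auto
qed

lemma conj_attained_exists:
  fixes f :: "'a::euclidean_space \<Rightarrow> ereal"
  assumes proper: "proper_fun f" and lsc: "lsc_fun f"
    and w: "w \<in> interior (edom (fenchel_conj f))"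
  shows "\<exists>q. conj_attained f w q"
proof -
  obtain a C where a: "a > 0" "\<And>q. ereal (inner q w + a * norm q - C) \<le> f q"
    using fenchel_conj_interior_growth[OF proper w] by blast
  obtain p h0 where h0: "f p = ereal h0" using proper_funD(2)[OF proper] by blast
  define g where "g q = f q + ereal (- inner q w)" for q
  have "lsc_fun g" unfolding g_def
    using lsc proper_funD(1)[OF proper]
    by (intro lsc_fun_add lsc_fun_continuous continuous_intros) auto
  moreover have "g p \<le> g q" if "(h0 - inner p w + C) / a \<le> norm q" for q
  proof (cases "f q")
    case (real h)
    have "inner q w + a * norm q - C \<le> h" using a(2)[of q] real by simp
    moreover have "h0 - inner p w + C \<le> a * norm q" using that a by (simp add: field_simps)
    ultimately show ?thesis using real h0 by (simp add: g_def)
  qed (use proper_funD(1)[OF proper] h0 in \<open>auto simp: g_def\<close>)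
  ultimately obtain q where q: "\<And>u. g q \<le> g u" using lsc_fun_attains_min by blast
  have "g q \<le> g p" by (rule q)
  then obtain h where h: "f q = ereal h"
    using h0 proper_funD(1)[OF proper, of q] by (cases "f q") (auto simp: g_def)
  have "fenchel_conj f w \<le> ereal (inner q w - h)"
    unfolding fenchel_conj_def
  proof (rule SUP_least)
    fix y
    show "ereal (inner y w) - f y \<le> ereal (inner q w - h)"
      using q[of y] h proper_funD(1)[OF proper, of y] by (cases "f y") (auto simp: g_def)
  qed
  thus ?thesis using conj_attainedI[of f, OF h] by blast
qed

lemma conj_attained_sandwich:
  assumes proper: "proper_fun f" and "conj_attained f w p" "conj_attained f w' q"
  shows "\<bar>real_of_ereal (fenchel_conj f w') - real_of_ereal (fenchel_conj f w) - inner (w' - w) p\<bar>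
           \<le> norm (w' - w) * norm (q - p)"
proof -
  obtain hp where hp: "f p = ereal hp" "fenchel_conj f w = ereal (inner p w - hp)"
    using conj_attainedE[OF assms(2) proper] .
  obtain hq where hq: "f q = ereal hq" "fenchel_conj f w' = ereal (inner q w' - hq)"
    using conj_attainedE[OF assms(3) proper] .
  have "inner p w' - hp \<le> inner q w' - hq" "inner q w - hq \<le> inner p w - hp"
    using fenchel_young_real[of f, OF hp(1), of w'] fenchel_young_real[of f, OF hq(1), of w] hp hq
    by auto
  hence "0 \<le> inner q w' - hq - (inner p w - hp) - inner (w' - w) p"
    and "inner q w' - hq - (inner p w - hp) - inner (w' - w) p \<le> inner (w' - w) (q - p)"
    by (auto simp: inner_diff_left inner_diff_right inner_commute)
  moreover have "inner (w' - w) (q - p) \<le> norm (w' - w) * norm (q - p)"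
    by (rule norm_cauchy_schwarz)
  ultimately show ?thesis using hp hq by simp
qed

lemma conj_attained_locally_bounded:
  fixes f :: "'a::euclidean_space \<Rightarrow> ereal"
  assumes proper: "proper_fun f" and w: "w \<in> interior (edom (fenchel_conj f))"
    and p: "conj_attained f w p"
  obtains d B where "d > 0" "\<And>w' q. dist w' w < d \<Longrightarrow> conj_attained f w' q \<Longrightarrow> norm q \<le> B"
proof -
  obtain a C where a: "a > 0" "\<And>q. ereal (inner q w + a * norm q - C) \<le> f q"
    using fenchel_conj_interior_growth[OF proper w] by blast
  obtain hp where hp: "f p = ereal hp" "fenchel_conj f w = ereal (inner p w - hp)"
    using conj_attainedE[OF p proper] .
  show thesis
  proof (rule that[of "a / 2" "2 * (C + hp + norm p * (norm w + a)) / a"])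
    fix w' q assume w': "dist w' w < a / 2" and q: "conj_attained f w' q"
    obtain h where h: "f q = ereal h" "fenchel_conj f w' = ereal (inner q w' - h)"
      using conj_attainedE[OF q proper] .
    have "inner p w' - hp \<le> inner q w' - h"
      using fenchel_young_real[of f, OF hp(1), of w'] h by simp
    moreover have "inner q w + a * norm q - C \<le> h" using a(2)[of q] h by simp
    moreover have "inner q (w' - w) \<le> norm q * (a / 2)"
      using norm_cauchy_schwarz[of q "w' - w"] mult_left_mono[of "norm (w' - w)" "a / 2" "norm q"] w'
      by (simp add: dist_norm)
    moreover have "- inner p w' \<le> norm p * (norm w + a)"
    proof -
      have "norm w' \<le> norm w + a" using w' a(1) norm_triangle_ineq2[of w' w] by (simp add: dist_norm)
      thus ?thesis using Cauchy_Schwarz_ineq2[of p w'] mult_left_mono[of "norm w'" _ "norm p"]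
        by (smt (verit) norm_ge_zero)
    qed
    ultimately have "(a / 2) * norm q \<le> C + hp + norm p * (norm w + a)"
      by (simp add: inner_diff_right algebra_simps)
    thus "norm q \<le> 2 * (C + hp + norm p * (norm w + a)) / a"
      using a(1) by (simp add: field_simps)
  qed (use a in simp)
qed

lemma conj_attained_limit:
  assumes proper: "proper_fun f" and lsc: "lsc_fun f" and p: "conj_attained f w p"
    and attained: "\<And>n. conj_attained f (ws n) (qs n)"
    and ws: "ws \<longlonglongrightarrow> w" and qs: "qs \<longlonglongrightarrow> l"
  shows "conj_attained f w l"
proof -
  obtain hp where hp: "f p = ereal hp" "fenchel_conj f w = ereal (inner p w - hp)"
    using conj_attainedE[OF p proper] .
  define c where "c = hp - inner p w + inner l w"
  have "f l \<le> ereal c"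
  proof (rule ccontr)
    assume "\<not> f l \<le> ereal c"
    then obtain c' where c': "c < c'" "ereal c' < f l" using ereal_dense2 by (metis not_le less_ereal.simps(1))
    have "eventually (\<lambda>z. ereal c' < f z) (nhds l)"
      using lsc c'(2) unfolding lsc_fun_iff_nhds by blast
    hence "eventually (\<lambda>n. ereal c' < f (qs n)) sequentially"
      using qs unfolding filterlim_iff by blast
    moreover have "(\<lambda>n. hp - inner p (ws n) + inner (qs n) (ws n)) \<longlonglongrightarrow> c"
      unfolding c_def by (intro tendsto_intros ws qs)
    hence "eventually (\<lambda>n. hp - inner p (ws n) + inner (qs n) (ws n) < c') sequentially"
      using c'(1) by (rule order_tendstoD(2))
    ultimately have "eventually (\<lambda>n. False) sequentially"
    proof eventually_elim
      case (elim n)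
      obtain h where h: "f (qs n) = ereal h" "fenchel_conj f (ws n) = ereal (inner (qs n) (ws n) - h)"
        using conj_attainedE[OF attained proper] .
      have "inner p (ws n) - hp \<le> inner (qs n) (ws n) - h"
        using fenchel_young_real[of f, OF hp(1), of "ws n"] h by simp
      with elim h show ?case by simp
    qed
    thus False by simp
  qed
  then obtain hl where hl: "f l = ereal hl" "hl \<le> c"
    using proper_funD(1)[OF proper, of l] by (cases "f l") auto
  show ?thesis
    by (rule conj_attainedI[of f, OF hl(1)]) (use hp(2) hl(2) in \<open>simp add: c_def\<close>)
qed

section \<open>The conjugate of a Legendre function\<close>

locale legendre_conj =
  fixes H :: "'a::euclidean_space \<Rightarrow> ereal"
  assumes legendre: "legendre H"
begin

abbreviation H_conj :: "'a \<Rightarrow> ereal" where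
  "H_conj \<equiv> fenchel_conj H"

lemma proper_H: "proper_fun H" and lsc_H: "lsc_fun H"
  using legendre unfolding legendre_def Gamma0_def by blast+

lemma conj_attained_gradient:
  assumes "conj_attained H w q"
  shows "q \<in> interior (edom H)" "w = egrad H q"
proof -
  have w: "w \<in> subdiff H q" by (rule conj_attained_imp_subdiff[OF assms proper_H])
  hence "q \<in> edom H" by (simp add: subdiff_def)
  with w show q: "q \<in> interior (edom H)"
    using legendre unfolding legendre_def by blast
  with w show "w = egrad H q"
    using legendre unfolding legendre_def by blast
qed

lemma conj_attained_unique:
  assumes "conj_attained H w q1" "conj_attained H w q2"
  shows "q1 = q2"
proof (rule ccontr)
  assume "q1 \<noteq> q2"
  obtain h1 where h1: "H q1 = ereal h1" "H_conj w = ereal (inner q1 w - h1)"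
    using conj_attainedE[OF assms(1) proper_H] .
  obtain h2 where h2: "H q2 = ereal h2" "H_conj w = ereal (inner q2 w - h2)"
    using conj_attainedE[OF assms(2) proper_H] .
  define m where "m = (1 - 1/2) *\<^sub>R q1 + (1/2::real) *\<^sub>R q2"
  have sc: "strictly_convex_on_set (interior (edom H)) H"
    using legendre unfolding legendre_def by blast
  have "H m < ereal (1 - 1/2) * H q1 + ereal (1/2) * H q2"
    unfolding m_def
    by (rule sc[unfolded strictly_convex_on_set_def, rule_format])
      (use conj_attained_gradient(1)[OF assms(1)] conj_attained_gradient(1)[OF assms(2)]
        \<open>q1 \<noteq> q2\<close> in auto)
  hence "H m < ereal (h1/2 + h2/2)" using h1 h2 by simp
  then obtain hm where hm: "H m = ereal hm" "hm < h1/2 + h2/2"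
    using proper_funD(1)[OF proper_H, of m] by (cases "H m") auto
  have "inner m w = inner q1 w / 2 + inner q2 w / 2"
    unfolding m_def by (simp add: inner_add_left)
  with fenchel_young_real[of H, OF hm(1), of w] h1 h2 hm(2) show False by simp
qed

(* On interior (edom H_conj) this is the gradient of H_conj, see egrad_conj. *)
definition conj_grad :: "'a \<Rightarrow> 'a" where
  "conj_grad w = (SOME q. conj_attained H w q)"

lemma conj_attained_conj_grad:
  "w \<in> interior (edom H_conj) \<Longrightarrow> conj_attained H w (conj_grad w)"
  unfolding conj_grad_def using conj_attained_exists[OF proper_H lsc_H] by (rule someI_ex)

lemma conj_grad_limit:
  assumes w: "w \<in> interior (edom H_conj)"
    and ys: "ys \<longlonglongrightarrow> w" "\<And>n. ys n \<in> interior (edom H_conj)"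
    and l: "(\<lambda>n. conj_grad (ys n)) \<longlonglongrightarrow> l"
  shows "l = conj_grad w"
  using conj_attained_limit[OF proper_H lsc_H conj_attained_conj_grad[OF w]
      conj_attained_conj_grad[OF ys(2)] ys(1) l]
    conj_attained_unique conj_attained_conj_grad[OF w] by blast

lemma isCont_conj_grad:
  assumes w: "w \<in> interior (edom H_conj)"
  shows "isCont conj_grad w"
  unfolding continuous_at_eps_delta
proof (intro allI impI)
  fix \<epsilon> :: real assume "\<epsilon> > 0"
  let ?p = "conj_grad w"
  obtain d B where d: "d > 0" "\<And>w' q. dist w' w < d \<Longrightarrow> conj_attained H w' q \<Longrightarrow> norm q \<le> B"
    using conj_attained_locally_bounded[OF proper_H w conj_attained_conj_grad[OF w]] by blast
  obtain e where e: "e > 0" "ball w e \<subseteq> interior (edom H_conj)"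
    using w open_interior open_contains_ball by blast
  \<comment> \<open>otherwise a bounded sequence of maximisers stays \<open>\<epsilon>\<close> away from \<open>?p\<close>,
    but limits of its subsequences are maximisers at \<open>w\<close>\<close>
  show "\<exists>\<delta>>0. \<forall>y. dist y w < \<delta> \<longrightarrow> dist (conj_grad y) ?p < \<epsilon>"
  proof (rule ccontr)
    assume "\<not> ?thesis"
    hence far: "\<forall>\<delta>>0. \<exists>y. dist y w < \<delta> \<and> \<epsilon> \<le> dist (conj_grad y) ?p"
      by (meson not_le)
    have "\<forall>n. \<exists>y. dist y w < min (min d e) (1 / Suc n) \<and> \<epsilon> \<le> dist (conj_grad y) ?p"
    proof
      fix n
      have "min (min d e) (1 / Suc n) > 0" using d(1) e(1) by simp
      thus "\<exists>y. dist y w < min (min d e) (1 / Suc n) \<and> \<epsilon> \<le> dist (conj_grad y) ?p"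
        using far by blast
    qed
    then obtain ys where ys: "\<And>n. dist (ys n) w < min (min d e) (1 / Suc n)"
      "\<And>n. \<epsilon> \<le> dist (conj_grad (ys n)) ?p" by metis
    have "(\<lambda>n. ys n - w) \<longlonglongrightarrow> 0"
      using ys(1) by (intro LIMSEQ_norm_0) (auto simp: dist_norm less_imp_le)
    hence "ys \<longlonglongrightarrow> w" by (rule LIM_zero_cancel)
    have ys_U: "ys n \<in> interior (edom H_conj)" for n
      using ys(1)[of n] e(2) by (auto simp: dist_commute)
    have "bounded (range (\<lambda>n. conj_grad (ys n)))"
      unfolding bounded_iff using d(2) conj_attained_conj_grad[OF ys_U] ys(1) by fastforce
    then obtain l r where r: "strict_mono r" "(\<lambda>n. conj_grad (ys (r n))) \<longlonglongrightarrow> l"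
      using bounded_imp_convergent_subsequence unfolding o_def by blast
    have "(\<lambda>n. ys (r n)) \<longlonglongrightarrow> w"
      using LIMSEQ_subseq_LIMSEQ[OF \<open>ys \<longlonglongrightarrow> w\<close> r(1)] by (simp add: o_def)
    hence "l = ?p" using conj_grad_limit[OF w _ ys_U r(2)] by blast
    moreover have "\<epsilon> \<le> dist l ?p"
      using ys(2) by (intro LIMSEQ_le_const[OF tendsto_dist[OF r(2) tendsto_const]]) auto
    ultimately show False using \<open>\<epsilon> > 0\<close> by simp
  qed
qed

lemma has_gderiv_conj:
  assumes w: "w \<in> interior (edom H_conj)"
  shows "GDERIV (\<lambda>y. real_of_ereal (H_conj y)) w :> conj_grad w"
proof -
  let ?Hr = "\<lambda>y. real_of_ereal (H_conj y)" and ?p = "conj_grad w"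
  have "eventually (\<lambda>y. y \<in> interior (edom H_conj) - {w}) (at w)"
    using w by (intro eventually_at_in_open) auto
  hence "eventually (\<lambda>y. norm (norm (?Hr y - ?Hr w - inner (y - w) ?p) / norm (y - w))
                         \<le> norm (conj_grad y - ?p)) (at w)"
  proof eventually_elim
    case (elim y)
    hence "y \<noteq> w" by blast
    from elim have "\<bar>?Hr y - ?Hr w - inner (y - w) ?p\<bar> \<le> norm (y - w) * norm (conj_grad y - ?p)"
      using conj_attained_sandwich[OF proper_H conj_attained_conj_grad[OF w]
          conj_attained_conj_grad] by blast
    with \<open>y \<noteq> w\<close> show ?case by (simp add: field_simps)
  qed
  moreover have "((\<lambda>y. norm (conj_grad y - ?p)) \<longlongrightarrow> 0) (at w)"
    using isCont_conj_grad[OF w] unfolding isCont_def by (intro tendsto_norm_zero LIM_zero)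
  ultimately have "((\<lambda>y. norm (?Hr y - ?Hr w - inner (y - w) ?p) / norm (y - w)) \<longlongrightarrow> 0) (at w)"
    by (rule Lim_null_comparison)
  thus ?thesis
    unfolding gderiv_def has_derivative_iff_norm by (simp add: bounded_linear_inner_left)
qed

lemma egrad_conj:
  assumes "w \<in> interior (edom H_conj)"
  shows "egrad H_conj w = conj_grad w"
  unfolding egrad_def
proof (rule the_equality)
  show "GDERIV (\<lambda>y. real_of_ereal (H_conj y)) w :> conj_grad w" by (rule has_gderiv_conj[OF assms])
  fix D assume "GDERIV (\<lambda>y. real_of_ereal (H_conj y)) w :> D"
  hence "(\<lambda>h. inner h D) = (\<lambda>h. inner h (conj_grad w))"
    using has_derivative_unique has_gderiv_conj[OF assms] unfolding gderiv_def by blast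
  hence "inner (D - conj_grad w) D = inner (D - conj_grad w) (conj_grad w)" by metis
  hence "inner (D - conj_grad w) (D - conj_grad w) = 0" by (simp add: inner_diff_right)
  thus "D = conj_grad w" by simp
qed

lemma bregman_conj_eq:
  assumes "u \<in> interior (edom H_conj)"
  shows "bregman H_conj a u = H_conj a + H (conj_grad u) - ereal (inner (conj_grad u) a)"
proof -
  obtain h where h: "H (conj_grad u) = ereal h"
    "H_conj u = ereal (inner (conj_grad u) u - h)"
    using conj_attainedE[OF conj_attained_conj_grad[OF assms] proper_H] .
  show ?thesis
    unfolding bregman_def egrad_conj[OF assms] h
    using fenchel_conj_not_MInf[OF proper_H, of a]
    by (cases "H_conj a") (auto simp: inner_diff_right)
qed

lemma conj_strictly_convex:
  assumes v: "v \<in> interior (edom H_conj)" and "v \<noteq> w" "0 < s" "s < 1"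
    and fv: "H_conj v = ereal fv" and fw: "H_conj w = ereal fw"
    and m: "(1 - s) *\<^sub>R v + s *\<^sub>R w \<in> interior (edom H_conj)"
  shows "H_conj ((1 - s) *\<^sub>R v + s *\<^sub>R w) < ereal ((1 - s) * fv + s * fw)"
proof -
  let ?m = "(1 - s) *\<^sub>R v + s *\<^sub>R w"
  obtain h where h: "H (conj_grad ?m) = ereal h" "H_conj ?m = ereal (inner (conj_grad ?m) ?m - h)"
    using conj_attainedE[OF conj_attained_conj_grad[OF m] proper_H] .
  let ?a = "\<lambda>y. inner (conj_grad ?m) y - h"
  have le: "?a v \<le> fv" "?a w \<le> fw"
    using fenchel_young_real[of H, OF h(1)] fv fw by (metis ereal_less_eq(3))+
  have "\<not> (?a v = fv \<and> ?a w = fw)"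
  proof
    assume "?a v = fv \<and> ?a w = fw"
    hence "conj_attained H v (conj_grad ?m)" "conj_attained H w (conj_grad ?m)"
      using fv fw by (auto intro!: conj_attainedI[of H, OF h(1)])
    thus False using conj_attained_gradient(2) \<open>v \<noteq> w\<close> by metis
  qed
  hence "(1 - s) * ?a v + s * ?a w < (1 - s) * fv + s * fw"
    using le \<open>0 < s\<close> \<open>s < 1\<close>
    by (smt (verit) mult_less_cancel_left_pos mult_left_mono)
  moreover have "?a ?m = (1 - s) * ?a v + s * ?a w"
    by (simp add: inner_add_right algebra_simps)
  ultimately show ?thesis using h(2) by simp
qed

end

section \<open>The two minimisation problems\<close>

locale legendre_prox = legendre_conj H for H :: "'a::euclidean_space \<Rightarrow> ereal" +
  fixes J :: "'a \<Rightarrow> ereal"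
  assumes Gamma0_J: "Gamma0 J" and one_coercive_J: "one_coercive J"
begin

definition primal_obj :: "real \<Rightarrow> 'a \<Rightarrow> 'a \<Rightarrow> ereal" where
  "primal_obj s z v = J (z - s *\<^sub>R v) + ereal s * H_conj v"

definition bregman_obj :: "real \<Rightarrow> 'a \<Rightarrow> 'a \<Rightarrow> ereal" where
  "bregman_obj s z w = ereal s * bregman H_conj (z /\<^sub>R s) w + fenchel_conj J (egrad H_conj w)"

lemma proper_J: "proper_fun J" and lsc_J: "lsc_fun J" and convex_J: "convex_fun J"
  using Gamma0_J unfolding Gamma0_def by blast+

lemma primal_obj_finite:
  assumes "s > 0" "primal_obj s z v \<noteq> \<infinity>"
  obtains j f where "J (z - s *\<^sub>R v) = ereal j" "H_conj v = ereal f"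
  using assms proper_funD(1)[OF proper_J, of "z - s *\<^sub>R v"]
    fenchel_conj_not_MInf[OF proper_H, of v] unfolding primal_obj_def
  by (cases "J (z - s *\<^sub>R v)"; cases "H_conj v") auto

lemma primal_obj_coercive:
  assumes s: "s > 0"
  obtains K where "\<And>v :: 'a. K \<le> norm v \<Longrightarrow> ereal P \<le> primal_obj s z v"
proof -
  obtain p h where h: "H p = ereal h" using proper_funD(2)[OF proper_H] by blast
  define c where "c = norm p + 1"
  obtain R where R: "\<And>y. R \<le> norm y \<Longrightarrow> ereal (c * norm y) \<le> J y"
    using one_coercive_linear_bound[OF one_coercive_J] by blast
  show thesis
  proof (rule that[of "(\<bar>R\<bar> + \<bar>P\<bar> + (c + 1) * norm z + s * \<bar>h\<bar>) / s"])
    fix v :: 'a assume "(\<bar>R\<bar> + \<bar>P\<bar> + (c + 1) * norm z + s * \<bar>h\<bar>) / s \<le> norm v"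
    hence sv: "\<bar>R\<bar> + \<bar>P\<bar> + (c + 1) * norm z + s * \<bar>h\<bar> \<le> s * norm v"
      using s by (simp add: field_simps)
    have "s * norm v \<le> norm z + norm (z - s *\<^sub>R v)"
      using norm_triangle_ineq4[of z "z - s *\<^sub>R v"] s by simp
    moreover have "norm z \<le> (c + 1) * norm z" "0 \<le> s * \<bar>h\<bar>"
      using s by (simp_all add: c_def algebra_simps)
    ultimately have "R \<le> norm (z - s *\<^sub>R v)" and
      "s * norm v - norm z \<le> norm (z - s *\<^sub>R v)" using sv by auto
    hence "ereal (c * (s * norm v - norm z)) \<le> ereal (c * norm (z - s *\<^sub>R v))"
      and "ereal (c * norm (z - s *\<^sub>R v)) \<le> J (z - s *\<^sub>R v)"
      using R[of "z - s *\<^sub>R v"] by (simp_all add: c_def mult_left_mono)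
    hence J: "ereal (c * (s * norm v - norm z)) \<le> J (z - s *\<^sub>R v)" by (rule order_trans)
    have F: "ereal (- (norm p * norm v) - h) \<le> H_conj v" by (rule fenchel_conj_ge_norm[of H, OF h])
    have "c * (s * norm v - norm z) + s * (- (norm p * norm v) - h) = s * norm v - c * norm z - s * h"
      by (simp add: c_def algebra_simps)
    moreover have "s * h \<le> s * \<bar>h\<bar>" "c * norm z \<le> (c + 1) * norm z"
      using s by (simp_all add: mult_left_mono algebra_simps)
    ultimately have "P \<le> c * (s * norm v - norm z) + s * (- (norm p * norm v) - h)"
      using sv by linarith
    also have "ereal \<dots> \<le> primal_obj s z v"
      unfolding primal_obj_def plus_ereal.simps(1)[symmetric] times_ereal.simps(1)[symmetric]
      using J F s by (intro add_mono ereal_mult_left_mono) auto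
    finally show "ereal P \<le> primal_obj s z v" by simp
  qed
qed

lemma primal_obj_has_min:
  assumes s: "s > 0"
  shows "\<exists>v. \<forall>u. primal_obj s z v \<le> primal_obj s z u"
proof (cases "\<exists>v1. primal_obj s z v1 \<noteq> \<infinity>")
  case True
  then obtain v1 j f where "J (z - s *\<^sub>R v1) = ereal j" "H_conj v1 = ereal f"
    using primal_obj_finite[OF s] by metis
  hence v1: "primal_obj s z v1 = ereal (j + s * f)" by (simp add: primal_obj_def)
  obtain K where K: "\<And>v. K \<le> norm v \<Longrightarrow> primal_obj s z v1 \<le> primal_obj s z v"
    using primal_obj_coercive[OF s, of "j + s * f" z] unfolding v1 by blast
  have "lsc_fun (primal_obj s z)"
    unfolding primal_obj_def
    using proper_funD(1)[OF proper_J] fenchel_conj_not_MInf[OF proper_H] s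
    by (intro lsc_fun_add lsc_fun_comp[OF lsc_J] lsc_fun_cmult lsc_fun_fenchel_conj proper_H
        continuous_intros) (auto elim!: ereal_cases[of "H_conj _"])
  thus ?thesis using lsc_fun_attains_min K by blast
qed simp

lemma primal_min_segment_ineq:
  assumes s: "s > 0" and min: "\<And>u. primal_obj s z v \<le> primal_obj s z u"
    and j: "J (z - s *\<^sub>R v) = ereal j" and jy: "J y = ereal jy" and r: "0 \<le> r" "r \<le> 1"
    and fv: "H_conj v = ereal fv" and fr: "H_conj (v + r *\<^sub>R d) = ereal fr"
    and d: "s *\<^sub>R d = z - s *\<^sub>R v - y"
  shows "r * (j - jy) \<le> s * (fr - fv)"
proof -
  have "z - s *\<^sub>R (v + r *\<^sub>R d) = z - s *\<^sub>R v - r *\<^sub>R (s *\<^sub>R d)"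
    by (simp add: algebra_simps)
  also have "\<dots> = (1 - r) *\<^sub>R (z - s *\<^sub>R v) + r *\<^sub>R y"
    unfolding d by (simp add: algebra_simps)
  finally have J_le: "J (z - s *\<^sub>R (v + r *\<^sub>R d)) \<le> ereal ((1 - r) * j + r * jy)"
    using convex_funD[OF convex_J j jy r] by simp
  have "ereal (j + s * fv) = primal_obj s z v" using j fv by (simp add: primal_obj_def)
  also have "\<dots> \<le> primal_obj s z (v + r *\<^sub>R d)" by (rule min)
  also have "\<dots> \<le> ereal ((1 - r) * j + r * jy) + ereal (s * fr)"
    unfolding primal_obj_def fr using add_right_mono[OF J_le, of "ereal (s * fr)"] by simp
  finally show ?thesis by (simp add: algebra_simps)
qed

lemma primal_min_subdiff:
  assumes s: "s > 0" and min: "\<And>u. primal_obj s z v \<le> primal_obj s z u"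
    and v: "v \<in> interior (edom H_conj)" and j: "J (z - s *\<^sub>R v) = ereal j"
  shows "conj_grad v \<in> subdiff J (z - s *\<^sub>R v)"
proof -
  have "ereal (j + inner (conj_grad v) (y - (z - s *\<^sub>R v))) \<le> J y" for y
  proof (cases "J y")
    case (real jy)
    define d where "d = (1 / s) *\<^sub>R (z - s *\<^sub>R v - y)"
    have sd: "s *\<^sub>R d = z - s *\<^sub>R v - y" using s by (simp add: d_def)
    define g where "g r = real_of_ereal (H_conj (v + r *\<^sub>R d))" for r
    have "((\<lambda>r. (g r - g 0) / r) \<longlongrightarrow> inner d (conj_grad v)) (at_right 0)"
      using has_derivative_directional_limit[OF has_gderiv_conj[OF v, unfolded gderiv_def]]
      by (simp add: g_def)
    moreover have "eventually (\<lambda>r. j - jy \<le> s * ((g r - g 0) / r)) (at_right 0)"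
      using eventually_segment_in_open[OF open_interior v, of d]
    proof eventually_elim
      case (elim r)
      have "H_conj v = ereal (g 0)" "H_conj (v + r *\<^sub>R d) = ereal (g r)"
        unfolding g_def using fenchel_conj_real[OF proper_H] v elim interior_subset by auto
      with elim have "r * (j - jy) \<le> s * (g r - g 0)"
        by (intro primal_min_segment_ineq[OF s min j real _ _ _ _ sd]) auto
      thus ?case using elim by (simp add: field_simps)
    qed
    ultimately have "j - jy \<le> s * inner d (conj_grad v)"
      by (intro tendsto_lowerbound[OF tendsto_mult_left]) auto
    also have "s * inner d (conj_grad v) = inner (conj_grad v) (s *\<^sub>R d)" by (simp add: inner_commute)
    also have "\<dots> = - inner (conj_grad v) (y - (z - s *\<^sub>R v))"
      unfolding sd by (simp add: inner_diff_right)
    finally show ?thesis using real by simp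
  qed (use proper_funD(1)[OF proper_J] in auto)
  thus ?thesis using j unfolding subdiff_def edom_def by auto
qed

lemma primal_argmin_eq:
  assumes s: "s > 0" and min: "\<And>u. primal_obj s z v \<le> primal_obj s z u"
    and v: "v \<in> interior (edom H_conj)" and fin: "primal_obj s z v \<noteq> \<infinity>"
  shows "{w. \<forall>u. primal_obj s z w \<le> primal_obj s z u} = {v}"
proof (intro equalityI subsetI)
  fix w assume "w \<in> {w. \<forall>u. primal_obj s z w \<le> primal_obj s z u}"
  hence w_min: "\<And>u. primal_obj s z w \<le> primal_obj s z u" by blast
  have same: "primal_obj s z w = primal_obj s z v" using min w_min by (meson antisym)
  obtain j fv where j: "J (z - s *\<^sub>R v) = ereal j" and fv: "H_conj v = ereal fv"
    using primal_obj_finite[OF s fin] .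
  obtain jw fw where jw: "J (z - s *\<^sub>R w) = ereal jw" and fw: "H_conj w = ereal fw"
    using primal_obj_finite[OF s] fin same by metis
  have val: "jw + s * fw = j + s * fv" using same j fv jw fw by (simp add: primal_obj_def)
  show "w \<in> {v}"
  proof (rule ccontr)
    assume "w \<notin> {v}"
    obtain r where r: "0 < r" "r < 1" "v + r *\<^sub>R (w - v) \<in> interior (edom H_conj)"
      using eventually_happens'[OF _ eventually_segment_in_open[OF open_interior v]] by auto
    define m where "m = (1 - r) *\<^sub>R v + r *\<^sub>R w"
    have "m = v + r *\<^sub>R (w - v)" by (simp add: m_def algebra_simps)
    hence "H_conj m < ereal ((1 - r) * fv + r * fw)"
      unfolding m_def using conj_strictly_convex[OF v _ r(1,2) fv fw] r(3) \<open>w \<notin> {v}\<close> by auto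
    moreover have "z - s *\<^sub>R m = (1 - r) *\<^sub>R (z - s *\<^sub>R v) + r *\<^sub>R (z - s *\<^sub>R w)"
      by (simp add: m_def algebra_simps)
    hence "J (z - s *\<^sub>R m) \<le> ereal ((1 - r) * j + r * jw)"
      using convex_funD[OF convex_J j jw] r by simp
    ultimately have "primal_obj s z m < ereal ((1 - r) * j + r * jw + s * ((1 - r) * fv + r * fw))"
      unfolding primal_obj_def using s
      by (cases "J (z - s *\<^sub>R m)"; cases "H_conj m") (auto intro!: add_le_less_mono mult_strict_left_mono)
    also have "\<dots> = (1 - r) * (j + s * fv) + r * (jw + s * fw)" by (simp add: algebra_simps)
    also have "\<dots> = primal_obj s z v"
      unfolding val using j fv by (simp add: primal_obj_def algebra_simps)
    finally show False using min[of m] by simp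
  qed
qed (use min in auto)

lemma bregman_obj_lower_bound:
  assumes s: "s > 0" and j: "J (z - s *\<^sub>R v) = ereal j" and fa: "H_conj (z /\<^sub>R s) = ereal fa"
    and u: "u \<in> interior (edom H_conj)"
  obtains h where "H (conj_grad u) = ereal h"
    "ereal (s * fa - j + s * (h - inner (conj_grad u) v)) \<le> bregman_obj s z u"
proof -
  let ?q = "conj_grad u"
  obtain h where h: "H ?q = ereal h"
    using conj_attainedE[OF conj_attained_conj_grad[OF u] proper_H] by blast
  have "s * fa - j + s * (h - inner ?q v)
      = s * (fa + h - inner ?q (z /\<^sub>R s)) + (inner ?q (z - s *\<^sub>R v) - j)"
    using s by (simp add: inner_diff_right algebra_simps)
  hence "ereal (s * fa - j + s * (h - inner ?q v))
      = ereal s * ereal (fa + h - inner ?q (z /\<^sub>R s)) + ereal (inner ?q (z - s *\<^sub>R v) - j)"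
    by simp
  also have "\<dots> \<le> ereal s * ereal (fa + h - inner ?q (z /\<^sub>R s)) + fenchel_conj J ?q"
    using fenchel_young_real[of J, OF j, of ?q] by (intro add_left_mono) (simp add: inner_commute)
  also have "\<dots> = bregman_obj s z u"
    unfolding bregman_obj_def egrad_conj[OF u] bregman_conj_eq[OF u] fa h by simp
  finally show thesis using h that by blast
qed

lemma bregman_obj_at_primal_min:
  assumes s: "s > 0" and min: "\<And>u. primal_obj s z v \<le> primal_obj s z u"
    and v: "v \<in> interior (edom H_conj)" and j: "J (z - s *\<^sub>R v) = ereal j"
    and fv: "H_conj v = ereal fv" and fa: "H_conj (z /\<^sub>R s) = ereal fa"
  shows "bregman_obj s z v = ereal (s * fa - j - s * fv)"
proof -
  obtain h where h: "H (conj_grad v) = ereal h" "H_conj v = ereal (inner (conj_grad v) v - h)"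
    using conj_attainedE[OF conj_attained_conj_grad[OF v] proper_H] .
  have fv_eq: "fv = inner (conj_grad v) v - h" using h(2) fv by simp
  have "fenchel_conj J (conj_grad v) = ereal (inner (conj_grad v) (z - s *\<^sub>R v) - j)"
    by (rule fenchel_conj_eq_if_subdiff[OF primal_min_subdiff[OF s min v j] j])
  hence "bregman_obj s z v = ereal (s * (fa + h - inner (conj_grad v) (z /\<^sub>R s))
                                   + (inner (conj_grad v) (z - s *\<^sub>R v) - j))"
    unfolding bregman_obj_def egrad_conj[OF v] bregman_conj_eq[OF v] fa h(1) by simp
  also have "s * (fa + h - inner (conj_grad v) (z /\<^sub>R s)) + (inner (conj_grad v) (z - s *\<^sub>R v) - j)
      = s * fa - j - s * fv"
    unfolding fv_eq using s by (simp add: inner_diff_right field_simps)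
  finally show ?thesis .
qed

lemma bregman_argmin_eq:
  assumes s: "s > 0" and min: "\<And>u. primal_obj s z v \<le> primal_obj s z u"
    and v: "v \<in> interior (edom H_conj)" and fin: "primal_obj s z v \<noteq> \<infinity>"
    and a: "z /\<^sub>R s \<in> interior (edom H_conj)"
  shows "{w \<in> interior (edom H_conj). \<forall>u \<in> interior (edom H_conj).
            bregman_obj s z w \<le> bregman_obj s z u} = {v}"
proof -
  obtain j fv where j: "J (z - s *\<^sub>R v) = ereal j" and fv: "H_conj v = ereal fv"
    using primal_obj_finite[OF s fin] .
  obtain fa where fa: "H_conj (z /\<^sub>R s) = ereal fa"
    using fenchel_conj_real[OF proper_H] a interior_subset by blast
  let ?m = "s * fa - j - s * fv"
  have lower: "ereal ?m \<le> bregman_obj s z u" if u: "u \<in> interior (edom H_conj)" for u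
  proof -
    obtain h where h: "H (conj_grad u) = ereal h"
      and lb: "ereal (s * fa - j + s * (h - inner (conj_grad u) v)) \<le> bregman_obj s z u"
      using bregman_obj_lower_bound[OF s j fa u] .
    have "inner (conj_grad u) v - h \<le> fv" using fenchel_young_real[of H, OF h, of v] fv by simp
    hence "s * (inner (conj_grad u) v - h) \<le> s * fv" using s by (simp add: mult_left_mono)
    hence "?m \<le> s * fa - j + s * (h - inner (conj_grad u) v)" by (simp add: algebra_simps)
    with lb show ?thesis by (meson ereal_less_eq(3) order_trans)
  qed
  have at_v: "bregman_obj s z v = ereal ?m"
    by (rule bregman_obj_at_primal_min[OF s min v j fv fa])
  show ?thesis
  proof (intro equalityI subsetI)
    fix w assume "w \<in> {w \<in> interior (edom H_conj). \<forall>u \<in> interior (edom H_conj).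
                          bregman_obj s z w \<le> bregman_obj s z u}"
    hence w: "w \<in> interior (edom H_conj)" and "bregman_obj s z w \<le> ereal ?m"
      using at_v v by auto
    moreover obtain h where h: "H (conj_grad w) = ereal h"
      and lb: "ereal (s * fa - j + s * (h - inner (conj_grad w) v)) \<le> bregman_obj s z w"
      using bregman_obj_lower_bound[OF s j fa w] .
    ultimately have "ereal (s * fa - j + s * (h - inner (conj_grad w) v)) \<le> ereal ?m"
      by (meson order_trans)
    hence "s * (h - inner (conj_grad w) v) \<le> s * (- fv)" by (simp add: algebra_simps)
    hence "h - inner (conj_grad w) v \<le> - fv" using s by (rule mult_left_le_imp_le)
    hence "H_conj v \<le> ereal (inner (conj_grad w) v - h)" using fv by simp
    hence "conj_attained H v (conj_grad w)" by (rule conj_attainedI[of H, OF h])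
    hence "v = egrad H (conj_grad w)" by (rule conj_attained_gradient(2))
    moreover have "w = egrad H (conj_grad w)"
      by (rule conj_attained_gradient(2)[OF conj_attained_conj_grad[OF w]])
    ultimately show "w \<in> {v}" by simp
  qed (use v lower at_v in auto)
qed

lemma primal_min_bound:
  assumes s: "s > 0" and min: "\<And>u. primal_obj s z v \<le> primal_obj s z u"
    and J0: "J (z - s *\<^sub>R v0) \<le> ereal (s * M)" and F0: "H_conj v0 = ereal F0"
    and h0: "H p = ereal h0" and B: "norm (z /\<^sub>R s) \<le> B"
  shows "J (s *\<^sub>R (z /\<^sub>R s - v))
           \<le> ereal (s * ((M + F0 + h0 + norm p * B) + norm p * norm (z /\<^sub>R s - v)))"
proof -
  let ?e = "z /\<^sub>R s - v"
  have ze: "z - s *\<^sub>R v = s *\<^sub>R ?e" using s by (simp add: scaleR_diff_right)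
  have "primal_obj s z v \<le> primal_obj s z v0" by (rule min)
  also have "\<dots> \<le> ereal (s * M + s * F0)"
    unfolding primal_obj_def F0 using add_right_mono[OF J0, of "ereal (s * F0)"] by simp
  finally have le: "primal_obj s z v \<le> ereal (s * M + s * F0)" .
  then obtain j f where j: "J (z - s *\<^sub>R v) = ereal j" and f: "H_conj v = ereal f"
    using primal_obj_finite[OF s] by (metis PInfty_neq_ereal(1) ereal_infty_less_eq(1))
  have "j + s * f \<le> s * M + s * F0" using le j f by (simp add: primal_obj_def)
  moreover have "- (norm p * (B + norm ?e)) - h0 \<le> f"
  proof -
    have "norm v \<le> B + norm ?e" using B norm_triangle_ineq4[of "z /\<^sub>R s" ?e] by simp
    hence "norm p * norm v \<le> norm p * (B + norm ?e)" by (simp add: mult_left_mono)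
    thus ?thesis using fenchel_conj_ge_norm[of H, OF h0, of v] f by simp
  qed
  hence "s * (- (norm p * (B + norm ?e)) - h0) \<le> s * f" using s by (simp add: mult_left_mono)
  ultimately show ?thesis using j ze by (simp add: algebra_simps)
qed

lemma primal_min_tendsto:
  assumes t_pos: "\<And>k. t k > 0" and t_lim: "filterlim t at_top sequentially"
    and x_lim: "(\<lambda>k. x k /\<^sub>R t k) \<longlonglongrightarrow> v0" and v0: "v0 \<in> interior (edom H_conj)"
    and J_bound: "\<And>k. J (x k - t k *\<^sub>R v0) \<le> ereal (t k * M)"
    and min: "\<And>k u. primal_obj (t k) (x k) (v k) \<le> primal_obj (t k) (x k) u"
  shows "v \<longlonglongrightarrow> v0"
proof -
  obtain F0 where F0: "H_conj v0 = ereal F0"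
    using fenchel_conj_real[OF proper_H] v0 interior_subset by blast
  obtain p h0 where h0: "H p = ereal h0" using proper_funD(2)[OF proper_H] by blast
  obtain B where B: "\<And>k. norm (x k /\<^sub>R t k) \<le> B"
    using convergent_imp_Bseq[of "\<lambda>k. x k /\<^sub>R t k"] x_lim unfolding Bseq_def convergent_def by blast
  have "(\<lambda>k. x k /\<^sub>R t k - v k) \<longlonglongrightarrow> 0"
    using primal_min_bound[OF t_pos min J_bound F0 h0 B]
    by (rule one_coercive_tendsto_zero[OF one_coercive_J t_lim t_pos])
  hence "(\<lambda>k. x k /\<^sub>R t k - (x k /\<^sub>R t k - v k)) \<longlonglongrightarrow> v0 - 0" by (intro tendsto_diff x_lim)
  thus ?thesis by simp
qed

lemma primal_minimisers_tendsto:
  assumes t_pos: "\<And>k. t k > 0" and t_lim: "filterlim t at_top sequentially"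
    and x_lim: "(\<lambda>k. x k /\<^sub>R t k) \<longlonglongrightarrow> v0" and v0: "v0 \<in> interior (edom H_conj)"
    and J_bound: "\<And>k. J (x k - t k *\<^sub>R v0) \<le> ereal (t k * M)"
  obtains v where "\<And>k u. primal_obj (t k) (x k) (v k) \<le> primal_obj (t k) (x k) u"
    "\<And>k. primal_obj (t k) (x k) (v k) \<noteq> \<infinity>" "v \<longlonglongrightarrow> v0"
proof -
  define v where "v k = (SOME w. \<forall>u. primal_obj (t k) (x k) w \<le> primal_obj (t k) (x k) u)" for k
  have min: "primal_obj (t k) (x k) (v k) \<le> primal_obj (t k) (x k) u" for k u
    unfolding v_def using someI_ex[OF primal_obj_has_min[OF t_pos]] by blast
  obtain F0 where "H_conj v0 = ereal F0"
    using fenchel_conj_real[OF proper_H] v0 interior_subset by blast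
  hence "primal_obj (t k) (x k) v0 \<noteq> \<infinity>" for k
    using J_bound[of k] unfolding primal_obj_def by (cases "J (x k - t k *\<^sub>R v0)") auto
  hence "primal_obj (t k) (x k) (v k) \<noteq> \<infinity>" for k
    using min[of k v0] by (metis ereal_infty_less_eq(1))
  with min show thesis using primal_min_tendsto[OF t_pos t_lim x_lim v0 J_bound min] that by blast
qed

end

theorem proposition8p1:
  fixes J H :: "'a::euclidean_space \<Rightarrow> ereal"
    and v0 :: 'a and t :: "nat \<Rightarrow> real" and x :: "nat \<Rightarrow> 'a"
  assumes A1_J: "Gamma0 J" and A1_coercive: "one_coercive J"
    and A1_H: "Gamma0 H" and A1_legendre: "legendre H"
    and A2_v0: "v0 \<in> interior (edom (fenchel_conj H))"
    and A2_tpos: "\<And>k. t k > 0"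
    and A2_tlim: "filterlim t at_top sequentially"
    and A2_xlim: "(\<lambda>k. x k /\<^sub>R t k) \<longlonglongrightarrow> v0"
    and A2_dom: "\<And>k. x k - t k *\<^sub>R v0 \<in> edom J"
    and A2_bdd: "\<exists>M. \<forall>k. J (x k - t k *\<^sub>R v0) / ereal (t k) \<le> ereal M"
  shows "\<exists>N. \<exists>v :: nat \<Rightarrow> 'a.
           (\<forall>k\<ge>N.
              {w. \<forall>u. J (x k - t k *\<^sub>R w) + ereal (t k) * fenchel_conj H w
                      \<le> J (x k - t k *\<^sub>R u) + ereal (t k) * fenchel_conj H u} = {v k}
            \<and> {w \<in> interior (edom (fenchel_conj H)). \<forall>u \<in> interior (edom (fenchel_conj H)).
                  ereal (t k) * bregman (fenchel_conj H) (x k /\<^sub>R t k) w + fenchel_conj J (egrad (fenchel_conj H) w)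
                  \<le> ereal (t k) * bregman (fenchel_conj H) (x k /\<^sub>R t k) u + fenchel_conj J (egrad (fenchel_conj H) u)}
                = {v k})
           \<and> v \<longlonglongrightarrow> v0"
proof -
  interpret legendre_prox H J
    using A1_legendre A1_J A1_coercive by unfold_locales
  obtain M where M: "\<And>k. J (x k - t k *\<^sub>R v0) / ereal (t k) \<le> ereal M" using A2_bdd by blast
  have "J (x k - t k *\<^sub>R v0) \<le> ereal (t k * M)" for k
    using M[of k] A2_tpos[of k] A2_dom[of k] unfolding edom_def
    by (cases "J (x k - t k *\<^sub>R v0)") (auto simp: field_simps)
  then obtain v where v_min: "\<And>k u. primal_obj (t k) (x k) (v k) \<le> primal_obj (t k) (x k) u"
    and v_fin: "\<And>k. primal_obj (t k) (x k) (v k) \<noteq> \<infinity>" and v_lim: "v \<longlonglongrightarrow> v0"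
    using primal_minimisers_tendsto[OF A2_tpos A2_tlim A2_xlim A2_v0] by blast
  have "eventually (\<lambda>k. v k \<in> interior (edom H_conj) \<and> x k /\<^sub>R t k \<in> interior (edom H_conj))
          sequentially"
    using topological_tendstoD[OF v_lim open_interior A2_v0]
      topological_tendstoD[OF A2_xlim open_interior A2_v0] by (rule eventually_conj)
  then obtain N where "\<And>k. N \<le> k \<Longrightarrow> v k \<in> interior (edom H_conj) \<and> x k /\<^sub>R t k \<in> interior (edom H_conj)"
    unfolding eventually_sequentially by blast
  hence "{w. \<forall>u. primal_obj (t k) (x k) w \<le> primal_obj (t k) (x k) u} = {v k}
      \<and> {w \<in> interior (edom H_conj). \<forall>u \<in> interior (edom H_conj).
           bregman_obj (t k) (x k) w \<le> bregman_obj (t k) (x k) u} = {v k}" if "N \<le> k" for k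
    using primal_argmin_eq[OF A2_tpos v_min _ v_fin] bregman_argmin_eq[OF A2_tpos v_min _ v_fin] that
    by blast
  with v_lim show ?thesis unfolding primal_obj_def bregman_obj_def by blast
qed

end
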